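(* There exist pairs of measurement channels corresponding to non-commuting $2$-outcome POVMs $M=\{M_0,M_1\}$, $N=\{N_0,N_1\}$ that form a Maximal Entanglement Worst Case pair. For instance, $M_0=\begin{pmatrix}\tfrac{1}{10}&0\\0&\tfrac15\end{pmatrix}$, $M_1=I-M_0$, and $N_0=\begin{pmatrix}\tfrac{3}{10}&\sqrt{\tfrac1{10}}\\\sqrt{\tfrac1{10}}&\tfrac7{10}\end{pmatrix}$, $N_1=I-N_0$, give a MEWC pair (here $M_0-N_0$ has eigenvalues $-\tfrac7{10}$ and $0$, so it is rank one).
   Context: The measurement channel of a POVM $M$ is $\Phi_M(\rho)=\sum_i\operatorname{Tr}(\rho M_i)\,|i\rangle\langle i|$. With $\Delta_\Phi=\Phi_M-\Phi_N$, input dimension $d=2$, Choi operator $J(\mathcal{S})=\sum_{ij}\mathcal{S}(|i\rangle\langle j|)\otimes|i\rangle\langle j|$, ME-norm $\|\mathcal{S}\|_{\mathrm{ME}}=\|J(\mathcal{S})/d\|_1$ and diamond norm $\|\mathcal{S}\|_\diamond=\max_{\rho_{AA'}}\|(\mathcal{S}\otimes I_{A'})\rho_{AA'}\|_1$, the pair is Maximal Entanglement Worst Case (MEWC) if $\|\Delta_\Phi\|_\diamond=d\|\Delta_\Phi\|_{\mathrm{ME}}$; for dichotomic qubit measurements with $M_1\neq N_1$ this is equivalent to $\det(M_0-N_0)=0$. *)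

theory Defs
  imports "Jordan_Normal_Form.Char_Poly"
begin

(* All matrices are complex matrices of the Jordan_Normal_Form library.
   Tensor products use the index encoding (a, a') \<mapsto> a * d' + a'. *)

definition mtrace :: "complex mat \<Rightarrow> complex" where
  "mtrace A = (\<Sum>i<dim_row A. A $$ (i, i))"

definition adj :: "complex mat \<Rightarrow> complex mat" where
  "adj A = mat (dim_col A) (dim_row A) (\<lambda>(i, j). cnj (A $$ (j, i)))"

definition psd :: "nat \<Rightarrow> complex mat \<Rightarrow> bool" where
  "psd n A \<longleftrightarrow> A \<in> carrier_mat n n \<and>
     (\<forall>v. dim_vec v = n \<longrightarrow>
        (let q = (\<Sum>i<n. \<Sum>j<n. cnj (v $ i) * A $$ (i, j) * v $ j) in Im q = 0 \<and> Re q \<ge> 0))"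

definition density :: "nat \<Rightarrow> complex mat \<Rightarrow> bool" where
  "density n \<rho> \<longleftrightarrow> psd n \<rho> \<and> mtrace \<rho> = 1"

definition povm :: "nat \<Rightarrow> nat \<Rightarrow> (nat \<Rightarrow> complex mat) \<Rightarrow> bool" where
  "povm d m M \<longleftrightarrow> (\<forall>i<m. psd d (M i)) \<and>
     (\<forall>a<d. \<forall>b<d. (\<Sum>i<m. M i $$ (a, b)) = (1\<^sub>m d) $$ (a, b))"

definition meas_channel :: "nat \<Rightarrow> (nat \<Rightarrow> complex mat) \<Rightarrow> complex mat \<Rightarrow> complex mat" where
  "meas_channel m M \<rho> = mat m m (\<lambda>(i, j). if i = j then mtrace (\<rho> * M i) else 0)"

definition unitm :: "nat \<Rightarrow> nat \<Rightarrow> nat \<Rightarrow> complex mat" where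
  "unitm d a b = mat d d (\<lambda>(i, j). if i = a \<and> j = b then 1 else 0)"

text \<open>(S \<otimes> id_{d'}) X for a linear map S from d x d to k x k matrices, X on C^d \<otimes> C^d'.\<close>
definition ext_id :: "(complex mat \<Rightarrow> complex mat) \<Rightarrow> nat \<Rightarrow> nat \<Rightarrow> nat \<Rightarrow> complex mat \<Rightarrow> complex mat" where
  "ext_id S d k d' X = mat (k * d') (k * d') (\<lambda>(p, q).
     \<Sum>a<d. \<Sum>b<d. X $$ (a * d' + p mod d', b * d' + q mod d') * S (unitm d a b) $$ (p div d', q div d'))"

text \<open>Choi operator J(S) = sum_{ij} S(|i><j|) \<otimes> |i><j|.\<close>
definition choi :: "(complex mat \<Rightarrow> complex mat) \<Rightarrow> nat \<Rightarrow> nat \<Rightarrow> complex mat" where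
  "choi S d k = mat (k * d) (k * d) (\<lambda>(p, q). S (unitm d (p mod d) (q mod d)) $$ (p div d, q div d))"

text \<open>Trace norm = sum of singular values (with multiplicity), i.e. the sum of the square roots
  of the eigenvalues of X* X counted with algebraic multiplicity.\<close>
definition trace_norm :: "complex mat \<Rightarrow> real" where
  "trace_norm X = (\<Sum>e\<in>{e. poly (char_poly (adj X * X)) e = 0}.
      real (order e (char_poly (adj X * X))) * sqrt (Re e))"

definition diamond_norm :: "(complex mat \<Rightarrow> complex mat) \<Rightarrow> nat \<Rightarrow> nat \<Rightarrow> real" where
  "diamond_norm S d k = Sup {trace_norm (ext_id S d k d \<rho>) | \<rho>. density (d * d) \<rho>}"

definition me_norm :: "(complex mat \<Rightarrow> complex mat) \<Rightarrow> nat \<Rightarrow> nat \<Rightarrow> real" where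
  "me_norm S d k = trace_norm ((1 / of_nat d) \<cdot>\<^sub>m choi S d k)"

definition MEWC :: "nat \<Rightarrow> nat \<Rightarrow> (nat \<Rightarrow> complex mat) \<Rightarrow> (nat \<Rightarrow> complex mat) \<Rightarrow> bool" where
  "MEWC d m M N \<longleftrightarrow>
     (let \<Delta> = (\<lambda>\<rho>. meas_channel m M \<rho> - meas_channel m N \<rho>)
      in diamond_norm \<Delta> d m = real d * me_norm \<Delta> d m)"

end

theory Submission
  imports Defs
begin

(*
  Since M 1 = 1 - M 0 and N 1 = 1 - N 0, the difference of the two measurement channels is
  Delta(rho) = Tr(rho D) diag(1, -1) with D = M 0 - N 0. For the given POVMs det D = 0, so
  D = -|w><w| has rank one, with w = (sqrt(1/5), sqrt(1/2)). Consequently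
  (Delta (x) id)(rho) = diag(-W, W), where W = (<w| (x) 1) rho (|w> (x) 1) is positive
  semidefinite, and the trace norm of diag(-W, W) is 2 Tr W. Over density matrices rho,
  Tr W <= |w|^2 with equality at |w><w| / |w|^2 (x) |0><0|, so the diamond norm is 2 |w|^2.
  The normalised Choi matrix is the image of the maximally entangled state, for which
  Tr W = |w|^2 / 2; this gives ME-norm |w|^2 and hence the MEWC identity with d = 2.
*)

lemma sum_lessThan_2: "(\<Sum>i<(2::nat). g i) = g 0 + (g 1 :: 'a :: comm_monoid_add)"
  by (simp add: numeral_2_eq_2)

lemma sum_lessThan_4: "(\<Sum>i<(4::nat). g i) = g 0 + g 1 + g 2 + (g 3 :: 'a :: comm_monoid_add)"
  by (simp add: numeral_eq_Suc lessThan_Suc add_ac)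

section \<open>Trace norm via the characteristic polynomial\<close>

lemma sum_list_map_eq_sum_count_of_nat:
  fixes f :: "'a \<Rightarrow> 'b :: comm_semiring_1"
  shows "sum_list (map f xs) = (\<Sum>x\<in>set xs. of_nat (count_list xs x) * f x)"
proof (induction xs)
  case (Cons x xs)
  have "(\<Sum>y\<in>insert x (set xs). of_nat (count_list xs y) * f y)
      = (\<Sum>y\<in>set xs. of_nat (count_list xs y) * f y)"
    by (cases "x \<in> set xs") (simp_all add: insert_absorb)
  moreover have "of_nat (count_list (x # xs) y) * f y
      = of_nat (count_list xs y) * f y + (if x = y then f y else 0)" for y
    by (simp add: algebra_simps)
  ultimately show ?case using Cons by (simp add: sum.distrib add.commute)
qed simp

lemma order_prod_list_linear:
  fixes rs :: "'a :: idom list"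
  shows "order e (\<Prod>r\<leftarrow>rs. [:-r, 1:]) = count_list rs e"
proof (induction rs)
  case (Cons r rs)
  have "order e ([:-r, 1:] * (\<Prod>r\<leftarrow>rs. [:-r, 1:]))
      = order e [:-r, 1:] + order e (\<Prod>r\<leftarrow>rs. [:-r, 1:])"
    by (intro order_mult no_zero_divisors) (auto simp: prod_list_zero_iff)
  moreover have "order e [:-r, 1:] = (if r = e then 1 else 0)"
    using order_linear_power[of e "-r" 1] by auto
  ultimately show ?case using Cons by simp
qed simp

lemma trace_norm_eq_sum_list:
  assumes "char_poly (adj X * X) = (\<Prod>r\<leftarrow>rs. [:-r, 1:])"
  shows "trace_norm X = (\<Sum>r\<leftarrow>rs. sqrt (Re r))"
proof -
  have "{e. poly (\<Prod>r\<leftarrow>rs. [:-r, 1:]) e = 0} = set rs"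
    by (induction rs) (auto simp: poly_prod_list)
  then show ?thesis
    unfolding trace_norm_def assms order_prod_list_linear
    by (simp add: sum_list_map_eq_sum_count_of_nat)
qed

lemma char_poly_four_block_diag:
  fixes A D :: "'a :: idom mat"
  assumes A: "A \<in> carrier_mat n n" and D: "D \<in> carrier_mat m m"
  shows "char_poly (four_block_mat A (0\<^sub>m n m) (0\<^sub>m m n) D) = char_poly A * char_poly D"
proof -
  have "char_poly_matrix (four_block_mat A (0\<^sub>m n m) (0\<^sub>m m n) D)
      = four_block_mat (char_poly_matrix A) (0\<^sub>m n m) (0\<^sub>m m n) (char_poly_matrix D)"
    using A D by (intro eq_matI) (auto simp: char_poly_matrix_def)
  then show ?thesis
    unfolding char_poly_def using A D
    by (simp add: det_four_block_mat_lower_left_zero[of _ n _ m])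
qed

lemma det_2x2:
  assumes "A \<in> carrier_mat 2 2"
  shows "det A = A $$ (0, 0) * A $$ (1, 1) - A $$ (0, 1) * A $$ (1, 0)"
  using assms
  by (subst laplace_expansion_column[OF assms, of 0])
     (auto simp: cofactor_def mat_delete_def det_def numeral_2_eq_2 lessThan_Suc)

lemma char_poly_2x2:
  fixes A :: "'a :: comm_ring_1 mat"
  assumes A: "A \<in> carrier_mat 2 2"
  shows "char_poly A = [:det A, - (A $$ (0, 0) + A $$ (1, 1)), 1:]"
proof -
  have "char_poly_matrix A \<in> carrier_mat 2 2" using A by simp
  then show ?thesis
    unfolding char_poly_def det_2x2[OF \<open>char_poly_matrix A \<in> carrier_mat 2 2\<close>] det_2x2[OF A]
    using A by (simp add: char_poly_matrix_def algebra_simps)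
qed

lemma mtrace_2x2:
  "A \<in> carrier_mat 2 2 \<Longrightarrow> mtrace A = A $$ (0, 0) + A $$ (1, 1)"
  by (simp add: mtrace_def numeral_2_eq_2)

section \<open>Positive semidefinite 2 x 2 matrices\<close>

lemma two_mult_le_quadratic:
  fixes a d b x y :: real
  assumes a: "0 \<le> a" and d: "0 \<le> d" and b: "b\<^sup>2 \<le> a * d"
  shows "2 * b * x * y \<le> a * x\<^sup>2 + d * y\<^sup>2"
proof (cases "a = 0")
  case True
  with b have "b\<^sup>2 \<le> 0" by simp
  then have "b = 0" by simp
  with a d show ?thesis by simp
next
  case False
  with a have "0 < a" by simp
  have "a * (a * x\<^sup>2 + d * y\<^sup>2 - 2 * b * x * y) = (a * x - b * y)\<^sup>2 + (a * d - b\<^sup>2) * y\<^sup>2"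
    by (simp add: power2_eq_square algebra_simps)
  also have "\<dots> \<ge> 0" using b by simp
  finally show ?thesis using \<open>0 < a\<close> by (simp add: zero_le_mult_iff)
qed

lemma le_mult_if_quadratic_nonneg:
  fixes a d k :: real
  assumes a: "0 \<le> a" and d: "0 \<le> d" and k: "0 \<le> k"
    and nonneg: "\<And>t. 0 \<le> a * k - 2 * k * t + d * t\<^sup>2"
  shows "k \<le> a * d"
proof (cases "d = 0")
  case True
  from nonneg[of "a + 1"] have "0 \<le> - k * (a + 2)" by (simp add: True algebra_simps)
  with a k have "k = 0" by (simp add: mult_le_0_iff)
  then show ?thesis using a d by simp
next
  case False
  with d have "0 < d" by simp
  from nonneg[of "k / d"] have "0 \<le> (a * d - k) * k / d"
    using \<open>0 < d\<close> by (simp add: power2_eq_square field_simps)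
  with \<open>0 < d\<close> k have "0 \<le> (a * d - k) * k" by (simp add: zero_le_divide_iff)
  then show ?thesis using a d k by (cases "k = 0") (simp_all add: zero_le_mult_iff)
qed

lemma psd_2x2_iff:
  "psd 2 A \<longleftrightarrow> A \<in> carrier_mat 2 2 \<and> (\<forall>x y.
     let q = cnj x * A $$ (0, 0) * x + cnj x * A $$ (0, 1) * y
           + cnj y * A $$ (1, 0) * x + cnj y * A $$ (1, 1) * y
     in Im q = 0 \<and> 0 \<le> Re q)"
proof -
  have form: "(\<Sum>i<2. \<Sum>j<2. cnj (v $ i) * A $$ (i, j) * v $ j)
      = cnj (v $ 0) * A $$ (0, 0) * v $ 0 + cnj (v $ 0) * A $$ (0, 1) * v $ 1
      + cnj (v $ 1) * A $$ (1, 0) * v $ 0 + cnj (v $ 1) * A $$ (1, 1) * v $ 1" for v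
    by (simp add: numeral_2_eq_2)
  show ?thesis
  proof (intro iffI conjI allI)
    assume psd: "psd 2 A"
    then show "A \<in> carrier_mat 2 2" by (simp add: psd_def)
    fix x y :: complex
    define v where "v = vec 2 (\<lambda>i. if i = 0 then x else y)"
    have "v $ 0 = x" "v $ 1 = y" by (simp_all add: v_def)
    moreover have "dim_vec v = 2" by (simp add: v_def)
    ultimately show "let q = cnj x * A $$ (0, 0) * x + cnj x * A $$ (0, 1) * y
        + cnj y * A $$ (1, 0) * x + cnj y * A $$ (1, 1) * y in Im q = 0 \<and> 0 \<le> Re q"
      using psd unfolding psd_def form by metis
  next
    assume "A \<in> carrier_mat 2 2 \<and> (\<forall>x y. let q = cnj x * A $$ (0, 0) * x
        + cnj x * A $$ (0, 1) * y + cnj y * A $$ (1, 0) * x + cnj y * A $$ (1, 1) * y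
        in Im q = 0 \<and> 0 \<le> Re q)"
    then show "psd 2 A"
      unfolding psd_def form by blast
  qed
qed

lemma psd_2x2I:
  fixes a d :: real
  assumes A: "A \<in> carrier_mat 2 2"
    and diag: "A $$ (0, 0) = of_real a" "A $$ (1, 1) = of_real d"
    and herm: "A $$ (1, 0) = cnj (A $$ (0, 1))"
    and a: "0 \<le> a" and d: "0 \<le> d" and det: "(cmod (A $$ (0, 1)))\<^sup>2 \<le> a * d"
  shows "psd 2 A"
  unfolding psd_2x2_iff Let_def
proof (intro conjI allI A)
  fix x y :: complex
  define z where "z = cnj x * A $$ (0, 1) * y"
  have "cnj x * A $$ (0, 0) * x + cnj x * A $$ (0, 1) * y + cnj y * A $$ (1, 0) * x
      + cnj y * A $$ (1, 1) * y = of_real (a * (cmod x)\<^sup>2 + d * (cmod y)\<^sup>2 + 2 * Re z)"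
    unfolding diag herm z_def complex_eq_iff
    by (simp add: power2_eq_square cmod_power2[unfolded power2_eq_square] algebra_simps)
  moreover have "- (cmod (A $$ (0, 1)) * cmod x * cmod y) \<le> Re z"
    using abs_Re_le_cmod[of z] by (simp add: z_def norm_mult algebra_simps)
  moreover have "2 * cmod (A $$ (0, 1)) * cmod x * cmod y \<le> a * (cmod x)\<^sup>2 + d * (cmod y)\<^sup>2"
    using a d det by (rule two_mult_le_quadratic)
  ultimately show "Im (cnj x * A $$ (0, 0) * x + cnj x * A $$ (0, 1) * y
      + cnj y * A $$ (1, 0) * x + cnj y * A $$ (1, 1) * y) = 0"
    and "0 \<le> Re (cnj x * A $$ (0, 0) * x + cnj x * A $$ (0, 1) * y
      + cnj y * A $$ (1, 0) * x + cnj y * A $$ (1, 1) * y)"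
    by simp_all
qed

lemma psd_2x2D:
  assumes "psd 2 A"
  shows "A \<in> carrier_mat 2 2"
    and "A $$ (0, 0) = of_real (Re (A $$ (0, 0)))" "0 \<le> Re (A $$ (0, 0))"
    and "A $$ (1, 1) = of_real (Re (A $$ (1, 1)))" "0 \<le> Re (A $$ (1, 1))"
    and "A $$ (1, 0) = cnj (A $$ (0, 1))"
    and "(cmod (A $$ (0, 1)))\<^sup>2 \<le> Re (A $$ (0, 0)) * Re (A $$ (1, 1))"
proof -
  note form = assms[unfolded psd_2x2_iff Let_def]
  then show "A \<in> carrier_mat 2 2" by blast
  from form[THEN conjunct2, rule_format, of 1 0]
  show "A $$ (0, 0) = of_real (Re (A $$ (0, 0)))" "0 \<le> Re (A $$ (0, 0))"
    by (simp_all add: complex_eq_iff)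
  from form[THEN conjunct2, rule_format, of 0 1]
  show "A $$ (1, 1) = of_real (Re (A $$ (1, 1)))" "0 \<le> Re (A $$ (1, 1))"
    by (simp_all add: complex_eq_iff)
  from form[THEN conjunct2, rule_format, of 1 1] form[THEN conjunct2, rule_format, of 1 \<i>]
    \<open>A $$ (0, 0) = of_real (Re (A $$ (0, 0)))\<close> \<open>A $$ (1, 1) = of_real (Re (A $$ (1, 1)))\<close>
  show herm: "A $$ (1, 0) = cnj (A $$ (0, 1))"
    by (simp add: complex_eq_iff)
  define k where "k = (cmod (A $$ (0, 1)))\<^sup>2"
  have "0 \<le> Re (A $$ (0, 0)) * k - 2 * k * t + Re (A $$ (1, 1)) * t\<^sup>2" for t
  proof -
    have "cnj (- A $$ (0, 1)) * A $$ (0, 0) * - A $$ (0, 1) + cnj (- A $$ (0, 1)) * A $$ (0, 1) * t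
        + cnj (of_real t) * A $$ (1, 0) * - A $$ (0, 1) + cnj (of_real t) * A $$ (1, 1) * of_real t
        = of_real (Re (A $$ (0, 0)) * k - 2 * k * t + Re (A $$ (1, 1)) * t\<^sup>2)"
      unfolding herm k_def complex_eq_iff
      by (subst (1 2) \<open>A $$ (0, 0) = of_real (Re (A $$ (0, 0)))\<close>,
          subst (1 2) \<open>A $$ (1, 1) = of_real (Re (A $$ (1, 1)))\<close>)
         (simp add: power2_eq_square cmod_power2[unfolded power2_eq_square] algebra_simps)
    then show ?thesis
      using form[THEN conjunct2, rule_format, of "- A $$ (0, 1)" "of_real t"] by simp
  qed
  then show "(cmod (A $$ (0, 1)))\<^sup>2 \<le> Re (A $$ (0, 0)) * Re (A $$ (1, 1))"
    using le_mult_if_quadratic_nonneg \<open>0 \<le> Re (A $$ (0, 0))\<close> \<open>0 \<le> Re (A $$ (1, 1))\<close>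
    unfolding k_def by simp
qed

lemma psd_2x2_adj:
  assumes "psd 2 A"
  shows "adj A = A"
proof -
  note A = psd_2x2D[OF assms]
  have "adj A $$ (i, j) = A $$ (i, j)" if "i < 2" "j < 2" for i j
  proof -
    have "i = 0 \<or> i = 1" "j = 0 \<or> j = 1" using that by auto
    moreover have "Im (A $$ (0, 0)) = 0" "Im (A $$ (1, 1)) = 0"
      by (subst A(2), simp, subst A(4), simp)
    ultimately show ?thesis using A(1,6)
      by (elim disjE) (simp_all add: adj_def complex_eq_iff)
  qed
  with A(1) show ?thesis by (intro eq_matI) (auto simp: adj_def)
qed

lemma psd_2x2_eigenvalues:
  assumes "psd 2 A"
  obtains m1 m2 :: real
  where "0 \<le> m1" "0 \<le> m2"
    and "A $$ (0, 0) + A $$ (1, 1) = of_real (m1 + m2)" "det A = of_real (m1 * m2)"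
proof -
  note A = psd_2x2D[OF assms]
  define a where "a = Re (A $$ (0, 0))"
  define d where "d = Re (A $$ (1, 1))"
  define k where "k = (cmod (A $$ (0, 1)))\<^sup>2"
  define r where "r = sqrt ((a - d)\<^sup>2 + 4 * k)"
  have r2: "r\<^sup>2 = (a - d)\<^sup>2 + 4 * k" "0 \<le> r"
    unfolding r_def k_def by simp_all
  have "r\<^sup>2 \<le> (a + d)\<^sup>2"
    using r2 A(7) unfolding a_def d_def k_def by (simp add: power2_eq_square algebra_simps)
  then have "r \<le> a + d"
    using A(3,5) r2(2) unfolding a_def d_def by (simp add: power2_le_iff_abs_le)
  then have nonneg: "0 \<le> (a + d + r) / 2" "0 \<le> (a + d - r) / 2"
    using A(3,5) r2(2) unfolding a_def d_def by simp_all
  have "(a + d + r) / 2 + (a + d - r) / 2 = a + d"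
    by (simp add: field_simps)
  then have trace: "A $$ (0, 0) + A $$ (1, 1) = of_real ((a + d + r) / 2 + (a + d - r) / 2)"
    unfolding a_def d_def by (metis A(2) A(4) of_real_add)
  have "det A = of_real (a * d - k)"
    unfolding det_2x2[OF A(1)] a_def d_def k_def A(6)
    by (subst A(2), subst A(4)) (simp flip: complex_norm_square)
  also have "a * d - k = (a + d + r) / 2 * ((a + d - r) / 2)"
    using r2(1) by (simp add: power2_eq_square field_simps)
  finally show ?thesis
    by (rule that[OF nonneg trace])
qed

lemma char_poly_mult_self_2x2:
  fixes A :: "'a :: comm_ring_1 mat"
  assumes A: "A \<in> carrier_mat 2 2"
    and trace: "A $$ (0, 0) + A $$ (1, 1) = e\<^sub>1 + e\<^sub>2" and det: "det A = e\<^sub>1 * e\<^sub>2"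
  shows "char_poly (A * A) = [:- e\<^sub>1\<^sup>2, 1:] * [:- e\<^sub>2\<^sup>2, 1:]"
proof -
  have "(A * A) $$ (0, 0) + (A * A) $$ (1, 1) = (A $$ (0, 0) + A $$ (1, 1))\<^sup>2 - 2 * det A"
    using A by (simp add: det_2x2 scalar_prod_def numeral_2_eq_2 power2_eq_square algebra_simps)
  also have "\<dots> = e\<^sub>1\<^sup>2 + e\<^sub>2\<^sup>2"
    unfolding trace det by (simp add: power2_eq_square algebra_simps)
  finally show ?thesis
    using A by (simp add: char_poly_2x2 det_mult det power2_eq_square)
qed

lemma adj_mult_block_diag_uminus:
  assumes psd: "psd 2 A"
  shows "adj (four_block_mat (- A) (0\<^sub>m 2 2) (0\<^sub>m 2 2) A) * four_block_mat (- A) (0\<^sub>m 2 2) (0\<^sub>m 2 2) A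
    = four_block_mat (A * A) (0\<^sub>m 2 2) (0\<^sub>m 2 2) (A * A)"
proof -
  have A: "A \<in> carrier_mat 2 2" using psd_2x2D(1)[OF psd] .
  have herm: "cnj (A $$ (j, i)) = A $$ (i, j)" if "i < 2" "j < 2" for i j
    using arg_cong[OF psd_2x2_adj[OF psd], of "\<lambda>B. B $$ (i, j)"] A that by (simp add: adj_def)
  have "adj (four_block_mat (- A) (0\<^sub>m 2 2) (0\<^sub>m 2 2) A) = four_block_mat (- A) (0\<^sub>m 2 2) (0\<^sub>m 2 2) A"
    using A by (intro eq_matI) (auto simp: adj_def herm)
  moreover have "- 0\<^sub>m 2 2 = (0\<^sub>m 2 2 :: complex mat)"
    by (rule eq_matI) auto
  ultimately show ?thesis
    using A mult_four_block_mat[OF uminus_carrier_mat[OF A] zero_carrier_mat zero_carrier_mat A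
        uminus_carrier_mat[OF A] zero_carrier_mat zero_carrier_mat A]
    by simp
qed

lemma trace_norm_block_diag_uminus:
  assumes psd: "psd 2 A"
  shows "trace_norm (four_block_mat (- A) (0\<^sub>m 2 2) (0\<^sub>m 2 2) A) = 2 * Re (mtrace A)"
proof -
  obtain m1 m2 :: real where m: "0 \<le> m1" "0 \<le> m2"
    and trace: "A $$ (0, 0) + A $$ (1, 1) = of_real (m1 + m2)" and det: "det A = of_real (m1 * m2)"
    using psd_2x2_eigenvalues[OF psd] .
  have A: "A \<in> carrier_mat 2 2" using psd_2x2D(1)[OF psd] .
  let ?Z = "four_block_mat (- A) (0\<^sub>m 2 2) (0\<^sub>m 2 2) A"
  have "char_poly (A * A) = [:- (of_real m1)\<^sup>2, 1:] * [:- (of_real m2)\<^sup>2, 1:]"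
    using A trace det by (intro char_poly_mult_self_2x2) simp_all
  then have "char_poly (adj ?Z * ?Z)
      = (\<Prod>x\<leftarrow>[(of_real m1)\<^sup>2, (of_real m2)\<^sup>2, (of_real m1)\<^sup>2, (of_real m2)\<^sup>2]. [:- x, 1:])"
    unfolding adj_mult_block_diag_uminus[OF psd]
      char_poly_four_block_diag[OF mult_carrier_mat[OF A A] mult_carrier_mat[OF A A]]
    by (simp only: list.map prod_list.Cons prod_list.Nil mult_1_right mult.assoc)
  then have "trace_norm ?Z
      = (\<Sum>x\<leftarrow>[(of_real m1)\<^sup>2, (of_real m2)\<^sup>2, (of_real m1)\<^sup>2, (of_real m2)\<^sup>2]. sqrt (Re x))"
    by (rule trace_norm_eq_sum_list)
  also have "\<dots> = 2 * Re (A $$ (0, 0) + A $$ (1, 1))"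
    using m unfolding trace by (simp flip: of_real_power)
  finally show ?thesis
    using A by (simp add: mtrace_2x2)
qed

section \<open>Pure states and compression by a qubit vector\<close>

definition outer :: "nat \<Rightarrow> (nat \<Rightarrow> complex) \<Rightarrow> complex mat" where
  "outer n v = mat n n (\<lambda>(i, j). v i * cnj (v j))"

lemma psd_outer: "psd n (outer n v)"
  unfolding psd_def Let_def
proof (intro conjI allI impI)
  fix x :: "complex vec"
  define z where "z = (\<Sum>i<n. cnj (x $ i) * v i)"
  have "(\<Sum>i<n. \<Sum>j<n. cnj (x $ i) * outer n v $$ (i, j) * x $ j) = z * cnj z"
    unfolding z_def cnj_sum sum_product by (simp add: outer_def mult_ac)
  also have "\<dots> = of_real ((cmod z)\<^sup>2)"
    by (rule complex_norm_square[symmetric])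
  finally show "Im (\<Sum>i<n. \<Sum>j<n. cnj (x $ i) * outer n v $$ (i, j) * x $ j) = 0"
    and "0 \<le> Re (\<Sum>i<n. \<Sum>j<n. cnj (x $ i) * outer n v $$ (i, j) * x $ j)"
    by simp_all
qed (simp add: outer_def)

lemma mtrace_outer: "mtrace (outer n v) = of_real (\<Sum>i<n. (cmod (v i))\<^sup>2)"
  by (simp add: mtrace_def outer_def complex_norm_square del: of_real_power)

definition max_entangled :: "nat \<Rightarrow> complex mat" where
  "max_entangled d = outer (d * d) (\<lambda>p. if p div d = p mod d then of_real (1 / sqrt (real d)) else 0)"

lemma max_entangled_index:
  assumes "a < d" "r < d" "b < d" "s < d"
  shows "max_entangled d $$ (a * d + r, b * d + s) = (if a = r \<and> b = s then 1 / of_nat d else 0)"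
proof -
  have bound: "x * d + y < d * d" if "x < d" "y < d" for x y :: nat
  proof -
    have "x * d + y < (x + 1) * d" using that by simp
    also have "\<dots> \<le> d * d" using that by (intro mult_le_mono1) simp
    finally show ?thesis .
  qed
  have "of_real (1 / sqrt (real d)) * cnj (of_real (1 / sqrt (real d))) = (1 / of_nat d :: complex)"
    by (simp flip: of_real_mult)
  then show ?thesis
    using assms bound[of a r] bound[of b s] by (simp add: max_entangled_def outer_def)
qed

lemma psd_max_entangled: "psd (d * d) (max_entangled d)"
  unfolding max_entangled_def by (rule psd_outer)

lemma ext_id_max_entangled:
  "ext_id S d k d (max_entangled d) = (1 / of_nat d) \<cdot>\<^sub>m choi S d k"
proof (rule eq_matI)
  fix p q assume "p < dim_row ((1 / of_nat d) \<cdot>\<^sub>m choi S d k)" "q < dim_col ((1 / of_nat d) \<cdot>\<^sub>m choi S d k)"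
  then have pq: "p < k * d" "q < k * d" by (simp_all add: choi_def)
  then have "0 < d" by (cases "d = 0") simp_all
  then have "p mod d < d" "q mod d < d" by simp_all
  moreover have "(if P \<and> Q then x else 0) = (if Q then if P then x else 0 else (0 :: complex))"
    for P Q x by simp
  ultimately show "ext_id S d k d (max_entangled d) $$ (p, q) = ((1 / of_nat d) \<cdot>\<^sub>m choi S d k) $$ (p, q)"
    using pq by (simp add: ext_id_def choi_def max_entangled_index if_distrib[of "\<lambda>x. x * _"] cong: if_cong)
qed (simp_all add: ext_id_def choi_def)

(* (<w| (x) 1) rho (|w> (x) 1) for rho on C^2 (x) C^2, in the index encoding (a, i) |-> 2 a + i *)
definition compress :: "(nat \<Rightarrow> complex) \<Rightarrow> complex mat \<Rightarrow> complex mat" where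
  "compress w \<rho> = mat 2 2 (\<lambda>(i, j).
     \<Sum>a<2. \<Sum>b<2. cnj (w a) * w b * \<rho> $$ (2 * a + i, 2 * b + j))"

lemma psd_compress:
  assumes "psd 4 \<rho>"
  shows "psd 2 (compress w \<rho>)"
  unfolding psd_def Let_def
proof (intro conjI allI impI)
  fix v :: "complex vec"
  define f where "f = vec 4 (\<lambda>p. w (p div 2) * v $ (p mod 2))"
  have "(\<Sum>i<2. \<Sum>j<2. cnj (v $ i) * compress w \<rho> $$ (i, j) * v $ j)
      = (\<Sum>p<4. \<Sum>q<4. cnj (f $ p) * \<rho> $$ (p, q) * f $ q)"
    by (simp add: compress_def f_def sum_lessThan_4 sum_lessThan_2 algebra_simps del: One_nat_def)
       (simp add: numeral_eq_Suc algebra_simps)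
  moreover have "dim_vec f = 4" by (simp add: f_def)
  ultimately show "Im (\<Sum>i<2. \<Sum>j<2. cnj (v $ i) * compress w \<rho> $$ (i, j) * v $ j) = 0"
    and "0 \<le> Re (\<Sum>i<2. \<Sum>j<2. cnj (v $ i) * compress w \<rho> $$ (i, j) * v $ j)"
    using assms unfolding psd_def Let_def by simp_all
qed (simp add: compress_def)

lemma mtrace_compress_le:
  assumes psd: "psd 4 \<rho>"
  shows "Re (mtrace (compress w \<rho>)) \<le> ((cmod (w 0))\<^sup>2 + (cmod (w 1))\<^sup>2) * Re (mtrace \<rho>)"
proof -
  \<comment> \<open>w' is orthogonal to w with the same norm, so the two compressions add up to |w|^2 times
    the partial trace of rho\<close>
  define w' where "w' a = (if a = 0 then - cnj (w 1) else cnj (w 0))" for a :: nat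
  have "dim_row \<rho> = 4" using psd unfolding psd_def by blast
  then have "mtrace (compress w \<rho>) + mtrace (compress w' \<rho>)
      = (w 0 * cnj (w 0) + w 1 * cnj (w 1)) * mtrace \<rho>"
    by (simp add: mtrace_def compress_def w'_def sum_lessThan_4 sum_lessThan_2 algebra_simps del: One_nat_def)
       (simp add: numeral_eq_Suc algebra_simps)
  also have "w 0 * cnj (w 0) + w 1 * cnj (w 1) = of_real ((cmod (w 0))\<^sup>2 + (cmod (w 1))\<^sup>2)"
    by (simp only: complex_norm_square of_real_add)
  finally have "Re (mtrace (compress w \<rho>) + mtrace (compress w' \<rho>))
      = Re (of_real ((cmod (w 0))\<^sup>2 + (cmod (w 1))\<^sup>2) * mtrace \<rho>)"
    by (rule arg_cong)
  then have "Re (mtrace (compress w \<rho>)) + Re (mtrace (compress w' \<rho>))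
      = ((cmod (w 0))\<^sup>2 + (cmod (w 1))\<^sup>2) * Re (mtrace \<rho>)"
    by (simp del: of_real_add of_real_power)
  moreover have "0 \<le> Re (mtrace (compress w' \<rho>))"
    using psd_2x2D[OF psd_compress[OF psd]] by (simp add: mtrace_2x2)
  ultimately show ?thesis by linarith
qed

lemma mtrace_compress_max_entangled:
  "mtrace (compress w (max_entangled 2)) = of_real (((cmod (w 0))\<^sup>2 + (cmod (w 1))\<^sup>2) / 2)"
proof -
  have sqrt_2: "complex_of_real (sqrt 2) * complex_of_real (sqrt 2) = 2"
    by (simp flip: of_real_mult)
  have norm: "complex_of_real (cmod z) * complex_of_real (cmod z) = z * cnj z" for z
    by (simp flip: complex_norm_square add: power2_eq_square)
  show ?thesis
    by (simp add: mtrace_def compress_def max_entangled_def outer_def sum_lessThan_2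
        del: One_nat_def)
       (simp add: numeral_eq_Suc sqrt_2 norm field_simps)
qed

lemma mtrace_compress_product_state:
  "mtrace (compress w (outer 4 (\<lambda>p. if p mod 2 = 0 then u (p div 2) else 0)))
    = of_real ((cmod (cnj (w 0) * u 0 + cnj (w 1) * u 1))\<^sup>2)"
  by (simp add: mtrace_def compress_def outer_def sum_lessThan_2 complex_norm_square algebra_simps
      del: One_nat_def of_real_power)
     (simp add: numeral_eq_Suc algebra_simps)

section \<open>Dichotomic measurement channels\<close>

lemma mtrace_unitm_mult:
  assumes "A \<in> carrier_mat n n" "a < n" "b < n"
  shows "mtrace (unitm n a b * A) = A $$ (b, a)"
proof -
  have "(unitm n a b * A) $$ (i, i) = (if i = a then A $$ (b, i) else 0)" if "i < n" for i
    using assms that by (simp add: unitm_def scalar_prod_def if_distrib[of "\<lambda>x. x * _"] sum.delta cong: if_cong)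
  then have "mtrace (unitm n a b * A) = (\<Sum>i<n. if i = a then A $$ (b, i) else 0)"
    unfolding mtrace_def by (intro sum.cong) (simp_all add: unitm_def)
  then show ?thesis
    using assms by simp
qed

lemma meas_channel_unitm:
  assumes "\<And>i. i < m \<Longrightarrow> M i \<in> carrier_mat n n" and "a < n" "b < n"
  shows "meas_channel m M (unitm n a b) = mat m m (\<lambda>(i, j). if i = j then M i $$ (b, a) else 0)"
  using assms by (intro eq_matI) (simp_all add: meas_channel_def mtrace_unitm_mult)

lemma ext_id_dichotomic_difference:
  assumes M: "M 0 \<in> carrier_mat 2 2" "M 1 = 1\<^sub>m 2 - M 0"
    and N: "N 0 \<in> carrier_mat 2 2" "N 1 = 1\<^sub>m 2 - N 0"
    and w: "N 0 - M 0 = outer 2 w"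
  shows "ext_id (\<lambda>\<rho>. meas_channel 2 M \<rho> - meas_channel 2 N \<rho>) 2 2 2 \<rho>
    = four_block_mat (- compress w \<rho>) (0\<^sub>m 2 2) (0\<^sub>m 2 2) (compress w \<rho>)"
proof -
  have less_2: "i < 2 \<longleftrightarrow> i = 0 \<or> i = 1" for i :: nat by auto
  have carrier: "M i \<in> carrier_mat 2 2" "N i \<in> carrier_mat 2 2" if "i < 2" for i
    using that M N by (auto simp: less_2)
  have "N 0 $$ (b, a) - M 0 $$ (b, a) = w b * cnj (w a)" if "a < 2" "b < 2" for a b
    using arg_cong[OF w, of "\<lambda>A. A $$ (b, a)"] M N that by (simp add: outer_def)
  then have "M i $$ (b, a) - N i $$ (b, a) = (if i = 0 then - 1 else 1) * (w b * cnj (w a))"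
    if "i < 2" "a < 2" "b < 2" for i a b
    using that M N by (auto simp: less_2 algebra_simps)
  then have \<Delta>: "(meas_channel 2 M (unitm 2 a b) - meas_channel 2 N (unitm 2 a b)) $$ (i, j)
      = (if i = j then (if i = 0 then - 1 else 1) * (w b * cnj (w a)) else 0)"
    if "a < 2" "b < 2" "i < 2" "j < 2" for a b i j
    using that carrier by (simp add: meas_channel_unitm)
  have less_4: "p < 4 \<longleftrightarrow> p = 0 \<or> p = 1 \<or> p = 2 \<or> p = 3" for p :: nat by auto
  show ?thesis
  proof (rule eq_matI)
    fix p q assume "p < dim_row (four_block_mat (- compress w \<rho>) (0\<^sub>m 2 2) (0\<^sub>m 2 2) (compress w \<rho>))"
      "q < dim_col (four_block_mat (- compress w \<rho>) (0\<^sub>m 2 2) (0\<^sub>m 2 2) (compress w \<rho>))"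
    then have "p < 4" "q < 4" by (simp_all add: compress_def)
    then show "ext_id (\<lambda>\<rho>. meas_channel 2 M \<rho> - meas_channel 2 N \<rho>) 2 2 2 \<rho> $$ (p, q)
      = four_block_mat (- compress w \<rho>) (0\<^sub>m 2 2) (0\<^sub>m 2 2) (compress w \<rho>) $$ (p, q)"
      unfolding less_4
      by (elim disjE; simp add: ext_id_def compress_def sum_lessThan_2 \<Delta> algebra_simps del: One_nat_def)
         (simp_all add: numeral_eq_Suc algebra_simps)
  qed (simp_all add: ext_id_def compress_def)
qed

lemma trace_norm_ext_id_dichotomic_difference:
  assumes "M 0 \<in> carrier_mat 2 2" "M 1 = 1\<^sub>m 2 - M 0"
    and "N 0 \<in> carrier_mat 2 2" "N 1 = 1\<^sub>m 2 - N 0"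
    and "N 0 - M 0 = outer 2 w" and "psd 4 \<rho>"
  shows "trace_norm (ext_id (\<lambda>\<rho>. meas_channel 2 M \<rho> - meas_channel 2 N \<rho>) 2 2 2 \<rho>)
    = 2 * Re (mtrace (compress w \<rho>))"
  unfolding ext_id_dichotomic_difference[OF assms(1-5)]
  using psd_compress[OF assms(6)] by (rule trace_norm_block_diag_uminus)

lemma density_maximizing_mtrace_compress:
  assumes "w 0 \<noteq> 0 \<or> w 1 \<noteq> 0"
  obtains \<rho> where "density 4 \<rho>" "Re (mtrace (compress w \<rho>)) = (cmod (w 0))\<^sup>2 + (cmod (w 1))\<^sup>2"
proof -
  define s where "s = (cmod (w 0))\<^sup>2 + (cmod (w 1))\<^sup>2"
  have "0 < s" using assms by (auto simp: s_def add_pos_nonneg add_nonneg_pos)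
  \<comment> \<open>the product state |w><w| / |w|^2 (x) |0><0|\<close>
  define \<rho> where "\<rho> = outer 4 (\<lambda>p. if p mod 2 = 0 then w (p div 2) / of_real (sqrt s) else 0)"
  have "mtrace \<rho> = of_real (((cmod (w 0))\<^sup>2 + (cmod (w 1))\<^sup>2) / s)"
    unfolding \<rho>_def mtrace_outer using \<open>0 < s\<close>
    by (simp add: sum_lessThan_4 norm_divide power_divide add_divide_distrib)
  also have "\<dots> = 1"
    using \<open>0 < s\<close> unfolding s_def[symmetric] by simp
  finally have "density 4 \<rho>"
    unfolding density_def \<rho>_def by (simp add: psd_outer)
  have "cnj (w 0) * (w 0 / of_real (sqrt s)) + cnj (w 1) * (w 1 / of_real (sqrt s)) = of_real (s / sqrt s)"
    by (simp add: s_def complex_norm_square add_divide_distrib mult.commute del: of_real_power)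
  then have "mtrace (compress w \<rho>) = of_real ((cmod (of_real (s / sqrt s)))\<^sup>2)"
    unfolding \<rho>_def using mtrace_compress_product_state[of w "\<lambda>a. w a / of_real (sqrt s)"]
    by simp
  then have "Re (mtrace (compress w \<rho>)) = s"
    using \<open>0 < s\<close> by (simp add: norm_divide power_divide power2_eq_square)
  with \<open>density 4 \<rho>\<close> show ?thesis
    unfolding s_def by (rule that)
qed

lemma MEWC_if_rank_one_difference:
  assumes M: "M 0 \<in> carrier_mat 2 2" "M 1 = 1\<^sub>m 2 - M 0"
    and N: "N 0 \<in> carrier_mat 2 2" "N 1 = 1\<^sub>m 2 - N 0"
    and w: "N 0 - M 0 = outer 2 w" and nonzero: "w 0 \<noteq> 0 \<or> w 1 \<noteq> 0"
  shows "MEWC 2 2 M N"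
proof -
  define s where "s = (cmod (w 0))\<^sup>2 + (cmod (w 1))\<^sup>2"
  let ?\<Delta> = "\<lambda>\<rho>. meas_channel 2 M \<rho> - meas_channel 2 N \<rho>"
  note trace_norm_ext = trace_norm_ext_id_dichotomic_difference[OF M N w]
  have "diamond_norm ?\<Delta> 2 2 = 2 * s"
    unfolding diamond_norm_def
  proof (rule cSup_eq_maximum)
    obtain \<rho> where "density 4 \<rho>" "Re (mtrace (compress w \<rho>)) = s"
      using density_maximizing_mtrace_compress[OF nonzero] unfolding s_def .
    then show "2 * s \<in> {trace_norm (ext_id ?\<Delta> 2 2 2 \<rho>) |\<rho>. density (2 * 2) \<rho>}"
      using trace_norm_ext[of \<rho>] unfolding mem_Collect_eq
      by (intro exI[of _ \<rho>]) (simp add: density_def)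
  next
    fix x assume "x \<in> {trace_norm (ext_id ?\<Delta> 2 2 2 \<rho>) |\<rho>. density (2 * 2) \<rho>}"
    then obtain \<rho> where "density 4 \<rho>" "x = trace_norm (ext_id ?\<Delta> 2 2 2 \<rho>)" by auto
    then show "x \<le> 2 * s"
      using trace_norm_ext[of \<rho>] mtrace_compress_le[of \<rho> w] by (simp add: density_def s_def)
  qed
  moreover have "me_norm ?\<Delta> 2 2 = s"
    unfolding me_norm_def ext_id_max_entangled[symmetric]
    using trace_norm_ext[of "max_entangled 2"] psd_max_entangled[of 2]
    by (simp add: mtrace_compress_max_entangled s_def)
  ultimately show ?thesis
    unfolding MEWC_def Let_def by simp
qed

lemma mat_of_rows_list_2x2:
  "mat_of_rows_list 2 [[a, b], [c, d]] = mat 2 2 (\<lambda>(i, j). [[a, b], [c, d]] ! i ! j)"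
  by (simp add: mat_of_rows_list_def numeral_2_eq_2)

lemma povm_dichotomic:
  assumes "psd d A" "psd d (1\<^sub>m d - A)"
  shows "povm d 2 (\<lambda>i. if i = 0 then A else 1\<^sub>m d - A)"
proof -
  have "A \<in> carrier_mat d d" using assms(1) by (simp add: psd_def)
  then show ?thesis
    using assms unfolding povm_def by (simp add: sum_lessThan_2)
qed

lemma povm_dichotomic_2x2:
  fixes a d :: real
  assumes A: "A = mat_of_rows_list 2 [[of_real a, b], [cnj b, of_real d]]"
    and "0 \<le> a" "a \<le> 1" "0 \<le> d" "d \<le> 1"
    and "(cmod b)\<^sup>2 \<le> a * d" "(cmod b)\<^sup>2 \<le> (1 - a) * (1 - d)"
  shows "povm 2 2 (\<lambda>i. if i = 0 then A else 1\<^sub>m 2 - A)"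
proof (rule povm_dichotomic)
  show "psd 2 A"
    using assms by (intro psd_2x2I[where a = a and d = d]) (simp_all add: mat_of_rows_list_2x2)
  show "psd 2 (1\<^sub>m 2 - A)"
    using assms by (intro psd_2x2I[where a = "1 - a" and d = "1 - d"])
      (simp_all add: mat_of_rows_list_2x2 minus_carrier_mat)
qed

theorem corollary7:
  fixes M N :: "nat \<Rightarrow> complex mat"
  defines "M \<equiv> (\<lambda>i. let M0 = mat_of_rows_list 2 [[1/10, 0], [0, 1/5]]
                    in if i = 0 then M0 else 1\<^sub>m 2 - M0)"
      and "N \<equiv> (\<lambda>i. let N0 = mat_of_rows_list 2
                             [[3/10, complex_of_real (sqrt (1/10))],
                              [complex_of_real (sqrt (1/10)), 7/10]]
                    in if i = 0 then N0 else 1\<^sub>m 2 - N0)"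
  shows "povm 2 2 M \<and> povm 2 2 N \<and> M 0 * N 0 \<noteq> N 0 * M 0 \<and> MEWC 2 2 M N"
proof -
  define w :: "nat \<Rightarrow> complex" where
    "w i = of_real (if i = 0 then sqrt (1/5) else sqrt (1/2))" for i
  have "povm 2 2 M"
    unfolding M_def Let_def
    by (rule povm_dichotomic_2x2[where a = "1/10" and d = "1/5" and b = 0]) (simp_all add: of_real_divide)
  moreover have "povm 2 2 N"
    unfolding N_def Let_def
    by (rule povm_dichotomic_2x2[where a = "3/10" and d = "7/10" and b = "of_real (sqrt (1/10))"])
       (simp_all add: of_real_divide power2_eq_square)
  moreover have "(M 0 * N 0) $$ (0, 1) \<noteq> (N 0 * M 0) $$ (0, 1)"
    unfolding M_def N_def
    by (simp add: mat_of_rows_list_2x2 scalar_prod_def atLeast0LessThan sum_lessThan_2)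
  then have "M 0 * N 0 \<noteq> N 0 * M 0"
    by metis
  moreover have "MEWC 2 2 M N"
  proof (rule MEWC_if_rank_one_difference)
    show "N 0 - M 0 = outer 2 w"
      unfolding M_def N_def Let_def outer_def w_def
      by (rule eq_matI)
         (auto simp: mat_of_rows_list_2x2 less_2_cases_iff simp flip: of_real_mult real_sqrt_mult)
  qed (simp_all add: M_def N_def mat_of_rows_list_2x2 minus_carrier_mat w_def)
  ultimately show ?thesis
    by blast
qed

end
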